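(* Let $N\ge1$, $k\in\mathbb{Z}$, $m\in\mathbb{Z}_{>0}$, $\Gamma\in\{\Gamma_0(N),\Gamma_1(N)\}$, and let $\psi\in J^N_{k,\frac mN}(\Gamma)$ be meromorphic with (at most) double poles at $z=z_s=\alpha\tau+\beta$ for $s=(\alpha,\beta)\in S(\psi)\subset\mathbb{Q}^2$. Then for all $\gamma=\begin{pmatrix}a&b\\c&d\end{pmatrix}\in\Gamma$: $E_s(\frac{a\tau+b}{c\tau+d})=(c\tau+d)^{k-2}E_{s\gamma}(\tau)$ and $D_s(\frac{a\tau+b}{c\tau+d})=(c\tau+d)^{k-1}D_{s\gamma}(\tau)$, where $s\gamma=(a\alpha+c\beta,b\alpha+d\beta)$.
   Context: $\mathbf{e}(t)=e^{2\pi it}$. $\Gamma_0(N)$: $c\equiv0\bmod N$; $\Gamma_1(N)$: also $a\equiv d\equiv1\bmod N$. $J^N_{k,\frac mN}(\Gamma)$: functions $\psi$ on $\mathbb{H}\times\mathbb{C}$ with $\psi(\frac{a\tau+b}{c\tau+d},\frac z{c\tau+d})=(c\tau+d)^k\mathbf{e}(\frac mN\frac{cz^2}{c\tau+d})\psi(\tau,z)$ for $\gamma\in\Gamma$ and $\psi(\tau,z+\lambda\tau+\mu)=\mathbf{e}(-\frac mN(\lambda^2\tau+2\lambda z+\lambda\mu))\psi(\tau,z)$ for $(\lambda,\mu)\in N\mathbb{Z}\times\mathbb{Z}$. The residues $D_s,E_s$ are defined by $\mathbf{e}(\frac mN\alpha z_s)\psi(\tau,z_s+\varepsilon)=\frac{E_s(\tau)}{(2\pi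 i\varepsilon)^2}+\frac{D_s(\tau)-2\frac mN\alpha E_s(\tau)}{2\pi i\varepsilon}+O(1)$ as $\varepsilon\to0$. *)

theory Defs
  imports "HOL-Complex_Analysis.Complex_Analysis" "HOL-Number_Theory.Cong"
begin

definition ee :: "complex \<Rightarrow> complex" where
  "ee t = exp (2 * of_real pi * \<i> * t)"

definition upper_half_plane :: "complex set" where
  "upper_half_plane = {\<tau>. Im \<tau> > 0}"

text \<open>Matrices (a,b,c,d) stand for [[a,b],[c,d]].\<close>
definition Gamma0 :: "nat \<Rightarrow> (int \<times> int \<times> int \<times> int) set" where
  "Gamma0 N = {(a,b,c,d). a * d - b * c = 1 \<and> [c = 0] (mod int N)}"

definition Gamma1 :: "nat \<Rightarrow> (int \<times> int \<times> int \<times> int) set" where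
  "Gamma1 N = {(a,b,c,d). a * d - b * c = 1 \<and> [c = 0] (mod int N)
                 \<and> [a = 1] (mod int N) \<and> [d = 1] (mod int N)}"

definition moebius :: "int \<times> int \<times> int \<times> int \<Rightarrow> complex \<Rightarrow> complex" where
  "moebius g \<tau> = (case g of (a,b,c,d) \<Rightarrow> (of_int a * \<tau> + of_int b) / (of_int c * \<tau> + of_int d))"

definition cfac :: "int \<times> int \<times> int \<times> int \<Rightarrow> complex \<Rightarrow> complex" where
  "cfac g \<tau> = (case g of (a,b,c,d) \<Rightarrow> of_int c * \<tau> + of_int d)"

definition zpt :: "rat \<times> rat \<Rightarrow> complex \<Rightarrow> complex" where
  "zpt s \<tau> = of_rat (fst s) * \<tau> + of_rat (snd s)"

definition ract :: "rat \<times> rat \<Rightarrow> int \<times> int \<times> int \<times> int \<Rightarrow> rat \<times> rat" where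
  "ract s g = (case g of (a,b,c,d) \<Rightarrow>
      (of_int a * fst s + of_int c * snd s, of_int b * fst s + of_int d * snd s))"

definition poles :: "(rat \<times> rat) set \<Rightarrow> complex \<Rightarrow> complex set" where
  "poles S \<tau> = (\<lambda>s. zpt s \<tau>) ` S"

text \<open>The transformation laws are required
  wherever both sides are evaluated away from poles.\<close>
definition mero_jacobi :: "nat \<Rightarrow> int \<Rightarrow> int \<Rightarrow> (int \<times> int \<times> int \<times> int) set
     \<Rightarrow> (rat \<times> rat) set \<Rightarrow> (complex \<Rightarrow> complex \<Rightarrow> complex) \<Rightarrow> bool" where
  "mero_jacobi N k m G S \<psi> \<longleftrightarrow>
     (\<forall>\<tau>\<in>upper_half_plane. (\<psi> \<tau>) meromorphic_on UNIV) \<and>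
     (\<forall>\<tau>\<in>upper_half_plane. \<forall>z. z \<notin> poles S \<tau> \<longrightarrow> (\<psi> \<tau>) analytic_on {z}) \<and>
     (\<forall>g\<in>G. \<forall>\<tau>\<in>upper_half_plane. \<forall>z.
        z \<notin> poles S \<tau> \<and> z / cfac g \<tau> \<notin> poles S (moebius g \<tau>) \<longrightarrow>
        \<psi> (moebius g \<tau>) (z / cfac g \<tau>) =
          (cfac g \<tau>) powi k *
          ee (of_int m / of_nat N * (case g of (a,b,c,d) \<Rightarrow> of_int c) * z\<^sup>2 / cfac g \<tau>) *
          \<psi> \<tau> z) \<and>
     (\<forall>l \<mu> :: int. \<forall>\<tau>\<in>upper_half_plane. \<forall>z.
        let lam = of_int (int N * l) :: complex in
        z \<notin> poles S \<tau> \<and> z + lam * \<tau> + of_int \<mu> \<notin> poles S \<tau> \<longrightarrow>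
        \<psi> \<tau> (z + lam * \<tau> + of_int \<mu>) =
          ee (- (of_int m / of_nat N) * (lam\<^sup>2 * \<tau> + 2 * lam * z + lam * of_int \<mu>)) * \<psi> \<tau> z)"

text \<open>E, D are the coefficients of the (at most double) pole expansion at z_s:
  e(m/N alpha z_s) psi(tau, z_s + eps) = E/(2 pi i eps)^2 + (D - 2 m/N alpha E)/(2 pi i eps) + O(1).\<close>
definition pole_expansion :: "nat \<Rightarrow> int \<Rightarrow> (complex \<Rightarrow> complex \<Rightarrow> complex)
     \<Rightarrow> rat \<times> rat \<Rightarrow> complex \<Rightarrow> complex \<Rightarrow> complex \<Rightarrow> bool" where
  "pole_expansion N m \<psi> s \<tau> E D \<longleftrightarrow>
     (let q = of_int m / of_nat N :: complex; \<alpha> = of_rat (fst s) :: complex; zs = zpt s \<tau> in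
      \<exists>C. eventually (\<lambda>\<epsilon>. norm (ee (q * \<alpha> * zs) * \<psi> \<tau> (zs + \<epsilon>)
              - E / (2 * of_real pi * \<i> * \<epsilon>)\<^sup>2
              - (D - 2 * q * \<alpha> * E) / (2 * of_real pi * \<i> * \<epsilon>)) \<le> C) (at 0))"

end

theory Submission
  imports Defs
begin

text \<open>
  For \<gamma> = (a, b, c, d) put \<tau>' = \<gamma>\<tau>, j = c\<tau> + d, s\<gamma> = (\<alpha>', \<beta>') and w = z_{s\<gamma>}(\<tau>).
  Then w = j z_s(\<tau>') and, because det \<gamma> = 1, also \<alpha> + c w = \<alpha>' j. The modular transformation
  law at z = w + j\<epsilon> therefore reads
    e(m/N \<alpha> z_s(\<tau>')) \<psi>(\<tau>', z_s(\<tau>') + \<epsilon>)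
      = j^k e(m/N c (2 w \<epsilon> + j \<epsilon>^2)) e(m/N \<alpha>' w) \<psi>(\<tau>, w + j\<epsilon>),
  i.e. the function expanded at z_s(\<tau>') is an explicit multiple of the one expanded at
  z_{s\<gamma>}(\<tau>), evaluated at j\<epsilon>. Comparing the coefficients of \<epsilon>^-2 gives the law for E.
  At \<epsilon>^-1 the exponential factor contributes 2 m/N c w E through its derivative at 0, and
  together with \<alpha> + c w = \<alpha>' j this reconciles the correction terms 2 m/N \<alpha> E in the
  definitions of D_s and D_{s\<gamma>}. The poles may be dense, so the comparison is made
  along \<epsilon> \<rightarrow> 0 avoiding a countable set.
\<close>

text \<open>
  The remainder is only required to be o(1/\<epsilon>),
  not O(1), so that the notion survives multiplication by functions merely differentiable at 0.
\<close>
definition has_double_pole_part ::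
    "(complex \<Rightarrow> complex) \<Rightarrow> complex \<Rightarrow> complex \<Rightarrow> complex filter \<Rightarrow> bool" where
  "has_double_pole_part f A B F \<longleftrightarrow> ((\<lambda>\<epsilon>. \<epsilon> * (f \<epsilon> - A / \<epsilon>\<^sup>2 - B / \<epsilon>)) \<longlongrightarrow> 0) F"

lemma eventually_nonzero_le_at_0:
  fixes F :: "'a::real_normed_vector filter"
  shows "F \<le> at 0 \<Longrightarrow> eventually (\<lambda>x. x \<noteq> 0) F"
  by (rule filter_leD) (auto simp: eventually_at_filter)

lemma tendsto_ident_le_at:
  "F \<le> at x \<Longrightarrow> ((\<lambda>y. y) \<longlongrightarrow> x) F"
  using tendsto_ident_at tendsto_mono by blast

lemma has_double_pole_part_unique:
  assumes "F \<noteq> bot" "F \<le> at 0"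
    and "has_double_pole_part f A B F" "has_double_pole_part f A' B' F"
  shows "A = A' \<and> B = B'"
proof -
  define h where "h = (\<lambda>\<epsilon>. \<epsilon> * (f \<epsilon> - A / \<epsilon>\<^sup>2 - B / \<epsilon>) - \<epsilon> * (f \<epsilon> - A' / \<epsilon>\<^sup>2 - B' / \<epsilon>))"
  have h_lim: "(h \<longlongrightarrow> 0) F"
    using tendsto_diff[OF assms(3,4)[unfolded has_double_pole_part_def]] by (simp add: h_def)
  have nonzero: "eventually (\<lambda>\<epsilon>. \<epsilon> \<noteq> 0) F"
    using assms(2) by (rule eventually_nonzero_le_at_0)
  have h_eq: "eventually (\<lambda>\<epsilon>. h \<epsilon> = (A' - A) / \<epsilon> + (B' - B)) F"
    using nonzero by eventually_elim (simp add: h_def field_simps power2_eq_square)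
  have "((\<lambda>\<epsilon>. \<epsilon> * h \<epsilon>) \<longlongrightarrow> 0 * 0) F"
    by (intro tendsto_mult tendsto_ident_le_at assms(2) h_lim)
  moreover have "eventually (\<lambda>\<epsilon>. \<epsilon> * h \<epsilon> = (A' - A) + (B' - B) * \<epsilon>) F"
    using h_eq nonzero by eventually_elim (simp add: field_simps)
  ultimately have "((\<lambda>\<epsilon>. (A' - A) + (B' - B) * \<epsilon>) \<longlongrightarrow> 0) F"
    by (simp add: Lim_transform_eventually)
  moreover have "((\<lambda>\<epsilon>. (A' - A) + (B' - B) * \<epsilon>) \<longlongrightarrow> (A' - A) + (B' - B) * 0) F"
    by (intro tendsto_intros tendsto_ident_le_at assms(2))
  ultimately have A: "A' = A"
    using tendsto_unique[OF assms(1)] by fastforce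
  have "eventually (\<lambda>\<epsilon>. h \<epsilon> = B' - B) F"
    using h_eq by eventually_elim (simp add: A)
  with h_lim have "((\<lambda>\<epsilon>. B' - B) \<longlongrightarrow> 0) F"
    by (rule Lim_transform_eventually)
  then have "B' - B = 0"
    using tendsto_unique[OF assms(1) tendsto_const] by blast
  with A show ?thesis by simp
qed

lemma has_double_pole_part_cong:
  assumes "eventually (\<lambda>\<epsilon>. f \<epsilon> = g \<epsilon>) F" "has_double_pole_part f A B F"
  shows "has_double_pole_part g A B F"
  using assms(2) unfolding has_double_pole_part_def
  by (rule Lim_transform_eventually) (use assms(1) in \<open>auto elim: eventually_mono\<close>)

lemma has_double_pole_part_mono:
  "F' \<le> F \<Longrightarrow> has_double_pole_part f A B F \<Longrightarrow> has_double_pole_part f A B F'"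
  unfolding has_double_pole_part_def by (rule tendsto_mono)

lemma has_double_pole_part_bounded_remainder:
  assumes "F \<le> at 0" "eventually (\<lambda>\<epsilon>. norm (f \<epsilon> - A / \<epsilon>\<^sup>2 - B / \<epsilon>) \<le> C) F"
  shows "has_double_pole_part f A B F"
  unfolding has_double_pole_part_def
proof (rule Lim_null_comparison)
  show "eventually (\<lambda>\<epsilon>. norm (\<epsilon> * (f \<epsilon> - A / \<epsilon>\<^sup>2 - B / \<epsilon>)) \<le> norm \<epsilon> * C) F"
    using assms(2) by eventually_elim (simp add: norm_mult mult_left_mono)
  have "((\<lambda>\<epsilon>. norm \<epsilon> * C) \<longlongrightarrow> norm (0::complex) * C) F"
    by (intro tendsto_intros tendsto_ident_le_at assms(1))
  then show "((\<lambda>\<epsilon>. norm \<epsilon> * C) \<longlongrightarrow> 0) F"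
    by simp
qed

lemma has_double_pole_part_scale:
  assumes "c \<noteq> 0" "has_double_pole_part f A B (at 0)"
  shows "has_double_pole_part (\<lambda>\<epsilon>. f (c * \<epsilon>)) (A / c\<^sup>2) (B / c) (at 0)"
proof -
  have "filterlim (\<lambda>\<epsilon>. c * \<epsilon>) (at 0) (at 0)"
  proof (rule filterlim_atI)
    show "((\<lambda>\<epsilon>. c * \<epsilon>) \<longlongrightarrow> 0) (at 0)"
      using tendsto_mult_right_zero[OF tendsto_ident_at] .
    show "eventually (\<lambda>\<epsilon>. c * \<epsilon> \<noteq> 0) (at 0)"
      using assms(1) by (simp add: eventually_at_filter)
  qed
  from filterlim_compose[OF assms(2)[unfolded has_double_pole_part_def] this]
  have "((\<lambda>\<epsilon>. (c * \<epsilon>) * (f (c * \<epsilon>) - A / (c * \<epsilon>)\<^sup>2 - B / (c * \<epsilon>)) / c) \<longlongrightarrow> 0 / c) (at 0)"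
    by (intro tendsto_divide) (simp_all add: assms(1))
  also have "(\<lambda>\<epsilon>. (c * \<epsilon>) * (f (c * \<epsilon>) - A / (c * \<epsilon>)\<^sup>2 - B / (c * \<epsilon>)) / c) =
             (\<lambda>\<epsilon>. \<epsilon> * (f (c * \<epsilon>) - A / c\<^sup>2 / \<epsilon>\<^sup>2 - B / c / \<epsilon>))"
  proof
    fix \<epsilon> :: complex
    show "(c * \<epsilon>) * (f (c * \<epsilon>) - A / (c * \<epsilon>)\<^sup>2 - B / (c * \<epsilon>)) / c =
          \<epsilon> * (f (c * \<epsilon>) - A / c\<^sup>2 / \<epsilon>\<^sup>2 - B / c / \<epsilon>)"
      using assms(1) by (cases "\<epsilon> = 0") (simp_all add: field_simps power_mult_distrib)
  qed
  finally show ?thesis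
    unfolding has_double_pole_part_def by simp
qed

lemma has_double_pole_part_mult:
  assumes u: "(u has_field_derivative V) (at 0)" and F: "F \<le> at 0"
    and f: "has_double_pole_part f A B F"
  shows "has_double_pole_part (\<lambda>\<epsilon>. u \<epsilon> * f \<epsilon>) (u 0 * A) (u 0 * B + V * A) F"
proof -
  define r where "r \<epsilon> = (u \<epsilon> - u 0) / \<epsilon> - V" for \<epsilon>
  define R where "R \<epsilon> = \<epsilon> * (f \<epsilon> - A / \<epsilon>\<^sup>2 - B / \<epsilon>)" for \<epsilon>
  have "((\<lambda>\<epsilon>. (u \<epsilon> - u 0) / (\<epsilon> - 0) - V) \<longlongrightarrow> V - V) (at 0)"
    using u unfolding has_field_derivative_iff by (intro tendsto_diff) auto
  then have r_lim: "(r \<longlongrightarrow> 0) F"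
    using F tendsto_mono unfolding r_def by fastforce
  have R_lim: "(R \<longlongrightarrow> 0) F"
    using f unfolding has_double_pole_part_def R_def .
  \<comment> \<open>Expand \<open>u \<epsilon> = u 0 + \<epsilon> (V + r \<epsilon>)\<close> and \<open>f \<epsilon> = A/\<epsilon>\<^sup>2 + B/\<epsilon> + R \<epsilon> / \<epsilon>\<close>.\<close>
  have "((\<lambda>\<epsilon>. u 0 * R \<epsilon> + r \<epsilon> * A + \<epsilon> * (V + r \<epsilon>) * (B + R \<epsilon>)) \<longlongrightarrow>
          u 0 * 0 + 0 * A + 0 * (V + 0) * (B + 0)) F"
    by (intro tendsto_intros r_lim R_lim tendsto_ident_le_at F)
  moreover have "eventually (\<lambda>\<epsilon>. u 0 * R \<epsilon> + r \<epsilon> * A + \<epsilon> * (V + r \<epsilon>) * (B + R \<epsilon>) =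
      \<epsilon> * (u \<epsilon> * f \<epsilon> - u 0 * A / \<epsilon>\<^sup>2 - (u 0 * B + V * A) / \<epsilon>)) F"
    using eventually_nonzero_le_at_0[OF F]
    by eventually_elim (simp add: r_def R_def field_simps power2_eq_square)
  ultimately show ?thesis
    unfolding has_double_pole_part_def by (simp add: Lim_transform_eventually)
qed

lemma at_within_Compl_countable_neq_bot:
  fixes x :: "'a::euclidean_space"
  assumes "countable B"
  shows "at x within - B \<noteq> bot"
proof -
  have "x islimpt - B"
    unfolding islimpt_approachable
  proof (intro allI impI)
    fix r :: real
    assume "r > 0"
    then obtain y where "y \<in> ball x r" "y \<notin> B \<union> {x}"
      using ball_minus_countable_nonempty[of "B \<union> {x}" r x] assms by blast
    then show "\<exists>y\<in>- B. y \<noteq> x \<and> dist y x < r"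
      by (auto simp: dist_commute)
  qed
  then show ?thesis
    using trivial_limit_within by blast
qed

lemma ee_add: "ee (x + y) = ee x * ee y"
  unfolding ee_def by (simp add: distrib_left exp_add)

lemma ee_quadratic_has_field_derivative_at_0:
  "((\<lambda>\<epsilon>. ee (x * \<epsilon> + y * \<epsilon>\<^sup>2)) has_field_derivative 2 * of_real pi * \<i> * x) (at 0)"
  unfolding ee_def by (rule derivative_eq_intros refl | simp)+

lemma cfac_nonzero:
  assumes "a * d - b * c = 1" "\<tau> \<in> upper_half_plane"
  shows "cfac (a, b, c, d) \<tau> \<noteq> 0"
proof
  assume zero: "cfac (a, b, c, d) \<tau> = 0"
  then have "of_int c * Im \<tau> = 0" "of_int c * Re \<tau> + of_int d = 0"
    by (simp_all add: cfac_def complex_eq_iff)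
  then have "c = 0" "d = 0"
    using assms(2) by (auto simp: upper_half_plane_def)
  with assms(1) show False by simp
qed

lemma Im_moebius:
  assumes "a * d - b * c = 1"
  shows "Im (moebius (a, b, c, d) \<tau>) = Im \<tau> / (cmod (cfac (a, b, c, d) \<tau>))\<^sup>2"
proof -
  have "Im (of_int a * \<tau> + of_int b) * Re (of_int c * \<tau> + of_int d)
        - Re (of_int a * \<tau> + of_int b) * Im (of_int c * \<tau> + of_int d)
        = of_int (a * d - b * c) * Im \<tau>"
    by (simp add: algebra_simps)
  then show ?thesis
    using assms by (simp add: moebius_def cfac_def Im_divide')
qed

lemma moebius_in_upper_half_plane:
  assumes "a * d - b * c = 1" "\<tau> \<in> upper_half_plane"
  shows "moebius (a, b, c, d) \<tau> \<in> upper_half_plane"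
  using assms cfac_nonzero[OF assms]
  by (simp add: upper_half_plane_def Im_moebius)

lemma zpt_ract:
  assumes "cfac (a, b, c, d) \<tau> \<noteq> 0"
  shows "zpt (ract s (a, b, c, d)) \<tau> = cfac (a, b, c, d) \<tau> * zpt s (moebius (a, b, c, d) \<tau>)"
  using assms
  by (simp add: zpt_def ract_def cfac_def moebius_def of_rat_add of_rat_mult field_simps)

lemma fst_ract_mult_cfac:
  assumes "a * d - b * c = 1"
  shows "of_rat (fst (ract s (a, b, c, d))) * cfac (a, b, c, d) \<tau>
         = of_rat (fst s) + of_int c * zpt (ract s (a, b, c, d)) \<tau>"
proof -
  have "of_rat (fst (ract s (a, b, c, d))) * cfac (a, b, c, d) \<tau>
          - (of_rat (fst s) + of_int c * zpt (ract s (a, b, c, d)) \<tau>)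
        = of_rat (fst s) * (of_int (a * d - b * c) - 1)"
    by (simp add: zpt_def ract_def cfac_def of_rat_add of_rat_mult algebra_simps)
  with assms show ?thesis by simp
qed

lemma pole_expansion_imp_has_double_pole_part:
  fixes N :: nat and m :: int and s :: "rat \<times> rat" and E D :: complex
  defines "q \<equiv> of_int m / of_nat N :: complex" and "\<alpha> \<equiv> of_rat (fst s) :: complex"
    and "K \<equiv> 2 * of_real pi * \<i> :: complex"
  assumes "pole_expansion N m \<psi> s \<tau> E D"
  shows "has_double_pole_part (\<lambda>\<epsilon>. ee (q * \<alpha> * zpt s \<tau>) * \<psi> \<tau> (zpt s \<tau> + \<epsilon>))
           (E / K\<^sup>2) ((D - 2 * q * \<alpha> * E) / K) (at 0)"
proof -
  obtain C where "eventually (\<lambda>\<epsilon>. norm (ee (q * \<alpha> * zpt s \<tau>) * \<psi> \<tau> (zpt s \<tau> + \<epsilon>)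
      - E / (K * \<epsilon>)\<^sup>2 - (D - 2 * q * \<alpha> * E) / (K * \<epsilon>)) \<le> C) (at 0)"
    using assms(4) unfolding pole_expansion_def Let_def q_def \<alpha>_def K_def by blast
  then have "eventually (\<lambda>\<epsilon>. norm (ee (q * \<alpha> * zpt s \<tau>) * \<psi> \<tau> (zpt s \<tau> + \<epsilon>)
      - E / K\<^sup>2 / \<epsilon>\<^sup>2 - (D - 2 * q * \<alpha> * E) / K / \<epsilon>) \<le> C) (at 0)"
    by (simp add: power_mult_distrib divide_divide_eq_left mult.commute)
  then show ?thesis
    by (rule has_double_pole_part_bounded_remainder[OF order_refl])
qed

lemma mero_jacobi_modular_law:
  assumes "mero_jacobi N k m G S \<psi>" "(a, b, c, d) \<in> G" "\<tau> \<in> upper_half_plane"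
    and "z \<notin> poles S \<tau>" "z / cfac (a, b, c, d) \<tau> \<notin> poles S (moebius (a, b, c, d) \<tau>)"
  shows "\<psi> (moebius (a, b, c, d) \<tau>) (z / cfac (a, b, c, d) \<tau>)
         = cfac (a, b, c, d) \<tau> powi k
           * ee (of_int m / of_nat N * of_int c * z\<^sup>2 / cfac (a, b, c, d) \<tau>) * \<psi> \<tau> z"
  using assms(1)[unfolded mero_jacobi_def, THEN conjunct2, THEN conjunct2, THEN conjunct1,
      rule_format, of "(a, b, c, d)" \<tau> z] assms(2-5)
  by simp

lemma mero_jacobi_shifted_law:
  fixes N :: nat and k m a b c d :: int and s :: "rat \<times> rat" and \<tau> :: complex
  defines "j \<equiv> cfac (a, b, c, d) \<tau>" and "\<tau>' \<equiv> moebius (a, b, c, d) \<tau>"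
    and "s' \<equiv> ract s (a, b, c, d)" and "q \<equiv> of_int m / of_nat N :: complex"
  defines "zs \<equiv> zpt s \<tau>'" and "w \<equiv> zpt s' \<tau>"
  assumes "mero_jacobi N k m G S \<psi>" "(a, b, c, d) \<in> G" "a * d - b * c = 1"
    and "\<tau> \<in> upper_half_plane" "zs + \<epsilon> \<notin> poles S \<tau>'" "w + j * \<epsilon> \<notin> poles S \<tau>"
  shows "ee (q * of_rat (fst s) * zs) * \<psi> \<tau>' (zs + \<epsilon>)
         = j powi k * ee (2 * q * of_int c * w * \<epsilon> + q * of_int c * j * \<epsilon>\<^sup>2)
           * (ee (q * of_rat (fst s') * w) * \<psi> \<tau> (w + j * \<epsilon>))"
proof -
  have j: "j \<noteq> 0"
    unfolding j_def using assms(9,10) by (rule cfac_nonzero)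
  have w: "w = j * zs"
    unfolding w_def zs_def j_def \<tau>'_def s'_def using j[unfolded j_def] by (rule zpt_ract)
  have fst_s': "of_rat (fst s') * j = of_rat (fst s) + of_int c * w"
    unfolding s'_def j_def w_def using assms(9) by (rule fst_ract_mult_cfac)
  have "(w + j * \<epsilon>) / j = zs + \<epsilon>"
    using j by (simp add: w field_simps)
  then have law: "\<psi> \<tau>' (zs + \<epsilon>) = j powi k * ee (q * of_int c * (w + j * \<epsilon>)\<^sup>2 / j) * \<psi> \<tau> (w + j * \<epsilon>)"
    using mero_jacobi_modular_law[OF assms(7,8,10), of "w + j * \<epsilon>"] assms(11,12)
    unfolding j_def \<tau>'_def q_def by simp
  have "q * of_rat (fst s) * zs + q * of_int c * (w + j * \<epsilon>)\<^sup>2 / j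
        = q * zs * (of_rat (fst s) + of_int c * w) + (2 * q * of_int c * w * \<epsilon> + q * of_int c * j * \<epsilon>\<^sup>2)"
    using j by (simp add: w field_simps power2_eq_square)
  also have "\<dots> = q * of_rat (fst s') * w + (2 * q * of_int c * w * \<epsilon> + q * of_int c * j * \<epsilon>\<^sup>2)"
    by (simp only: fst_s'[symmetric]) (simp add: w algebra_simps)
  finally show ?thesis
    unfolding law by (simp add: mult_ac flip: ee_add)
qed

lemma eventually_mero_jacobi_shifted_law:
  fixes N :: nat and k m a b c d :: int and s :: "rat \<times> rat" and \<tau> :: complex
  defines "j \<equiv> cfac (a, b, c, d) \<tau>" and "\<tau>' \<equiv> moebius (a, b, c, d) \<tau>"
    and "s' \<equiv> ract s (a, b, c, d)" and "q \<equiv> of_int m / of_nat N :: complex"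
  defines "zs \<equiv> zpt s \<tau>'" and "w \<equiv> zpt s' \<tau>"
  assumes "mero_jacobi N k m G S \<psi>" "(a, b, c, d) \<in> G" "a * d - b * c = 1"
    and "\<tau> \<in> upper_half_plane"
  obtains F where "F \<noteq> bot" "F \<le> at 0"
    and "eventually (\<lambda>\<epsilon>. ee (q * of_rat (fst s) * zs) * \<psi> \<tau>' (zs + \<epsilon>)
           = j powi k * ee (2 * q * of_int c * w * \<epsilon> + q * of_int c * j * \<epsilon>\<^sup>2)
             * (ee (q * of_rat (fst s') * w) * \<psi> \<tau> (w + j * \<epsilon>))) F"
proof
  define Bad where "Bad = (\<lambda>p. p - zs) ` poles S \<tau>' \<union> (\<lambda>p. (p - w) / j) ` poles S \<tau>"
  have j: "j \<noteq> 0"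
    unfolding j_def using assms(9,10) by (rule cfac_nonzero)
  have "countable S"
    by (rule countable_subset[OF subset_UNIV]) simp
  then show "at 0 within - Bad \<noteq> bot"
    unfolding Bad_def poles_def by (intro at_within_Compl_countable_neq_bot) simp
  show "at 0 within - Bad \<le> at 0"
    by (rule at_le) simp
  have "eventually (\<lambda>\<epsilon>. \<epsilon> \<notin> Bad) (at 0 within - Bad)"
    by (simp add: eventually_at_filter)
  then show "eventually (\<lambda>\<epsilon>. ee (q * of_rat (fst s) * zs) * \<psi> \<tau>' (zs + \<epsilon>)
           = j powi k * ee (2 * q * of_int c * w * \<epsilon> + q * of_int c * j * \<epsilon>\<^sup>2)
             * (ee (q * of_rat (fst s') * w) * \<psi> \<tau> (w + j * \<epsilon>))) (at 0 within - Bad)"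
  proof eventually_elim
    case (elim \<epsilon>)
    then have "zs + \<epsilon> \<notin> poles S \<tau>'" "w + j * \<epsilon> \<notin> poles S \<tau>"
      using j unfolding Bad_def by (auto simp: image_iff)
    then show ?case
      using mero_jacobi_shifted_law[OF assms(7-10)]
      unfolding j_def \<tau>'_def s'_def q_def zs_def w_def by blast
  qed
qed

lemma mero_jacobi_pole_coefficients_compare:
  fixes N :: nat and k m a b c d :: int and s :: "rat \<times> rat" and \<tau> :: complex
    and E D :: "rat \<times> rat \<Rightarrow> complex \<Rightarrow> complex"
  defines "j \<equiv> cfac (a, b, c, d) \<tau>" and "\<tau>' \<equiv> moebius (a, b, c, d) \<tau>"
    and "s' \<equiv> ract s (a, b, c, d)" and "q \<equiv> of_int m / of_nat N :: complex"
  defines "w \<equiv> zpt s' \<tau>"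
  assumes mj: "mero_jacobi N k m G S \<psi>" and g: "(a, b, c, d) \<in> G" and det: "a * d - b * c = 1"
    and \<tau>: "\<tau> \<in> upper_half_plane"
    and pe: "\<And>s \<tau>. \<tau> \<in> upper_half_plane \<Longrightarrow> pole_expansion N m \<psi> s \<tau> (E s \<tau>) (D s \<tau>)"
  shows "E s \<tau>' = j powi k / j\<^sup>2 * E s' \<tau>"
    and "D s \<tau>' - 2 * q * of_rat (fst s) * E s \<tau>'
         = j powi k / j * (D s' \<tau> - 2 * q * of_rat (fst s') * E s' \<tau>)
           + j powi k / j\<^sup>2 * (2 * q * of_int c * w) * E s' \<tau>"
proof -
  define zs where "zs = zpt s \<tau>'"
  define \<alpha> \<alpha>' K :: complex where "\<alpha> = of_rat (fst s)" and "\<alpha>' = of_rat (fst s')"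
    and "K = 2 * of_real pi * \<i>"
  define E1 D1 E2 D2 where "E1 = E s \<tau>'" and "D1 = D s \<tau>'" and "E2 = E s' \<tau>" and "D2 = D s' \<tau>"
  define L M where "L \<epsilon> = ee (q * \<alpha> * zs) * \<psi> \<tau>' (zs + \<epsilon>)"
    and "M \<epsilon> = ee (q * \<alpha>' * w) * \<psi> \<tau> (w + \<epsilon>)" for \<epsilon>
  define u where "u \<epsilon> = j powi k * ee (2 * q * of_int c * w * \<epsilon> + q * of_int c * j * \<epsilon>\<^sup>2)" for \<epsilon>
  define V where "V = j powi k * (K * (2 * q * of_int c * w))"
  have j: "j \<noteq> 0"
    unfolding j_def using det \<tau> by (rule cfac_nonzero)
  have \<tau>': "\<tau>' \<in> upper_half_plane"
    unfolding \<tau>'_def using det \<tau> by (rule moebius_in_upper_half_plane)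
  have L_part: "has_double_pole_part L (E1 / K\<^sup>2) ((D1 - 2 * q * \<alpha> * E1) / K) (at 0)"
    using pole_expansion_imp_has_double_pole_part[OF pe[OF \<tau>']]
    unfolding L_def E1_def D1_def zs_def q_def \<alpha>_def K_def .
  have "has_double_pole_part M (E2 / K\<^sup>2) ((D2 - 2 * q * \<alpha>' * E2) / K) (at 0)"
    using pole_expansion_imp_has_double_pole_part[OF pe[OF \<tau>]]
    unfolding M_def E2_def D2_def w_def q_def \<alpha>'_def K_def .
  then have M_scaled: "has_double_pole_part (\<lambda>\<epsilon>. M (j * \<epsilon>))
               (E2 / K\<^sup>2 / j\<^sup>2) ((D2 - 2 * q * \<alpha>' * E2) / K / j) (at 0)"
    using j by (intro has_double_pole_part_scale)
  have u_deriv: "(u has_field_derivative V) (at 0)"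
    unfolding u_def[abs_def] V_def K_def
    by (intro DERIV_cmult ee_quadratic_has_field_derivative_at_0)
  have u_0: "u 0 = j powi k"
    by (simp add: u_def ee_def)
  note uM_part = has_double_pole_part_mult[OF u_deriv order_refl M_scaled, unfolded u_0]
  obtain F where F_proper: "F \<noteq> bot" and F_le: "F \<le> at 0"
    and law: "eventually (\<lambda>\<epsilon>. L \<epsilon> = u \<epsilon> * M (j * \<epsilon>)) F"
    using eventually_mero_jacobi_shifted_law[OF mj g det \<tau>, of s]
    unfolding L_def M_def u_def j_def \<tau>'_def s'_def zs_def w_def q_def \<alpha>_def \<alpha>'_def by blast
  from has_double_pole_part_cong[OF eventually_mono[OF law sym] has_double_pole_part_mono[OF F_le uM_part]]
       has_double_pole_part_mono[OF F_le L_part]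
  have E_eq: "E1 / K\<^sup>2 = j powi k * (E2 / K\<^sup>2 / j\<^sup>2)"
    and B_eq: "(D1 - 2 * q * \<alpha> * E1) / K
               = j powi k * ((D2 - 2 * q * \<alpha>' * E2) / K / j) + V * (E2 / K\<^sup>2 / j\<^sup>2)"
    using has_double_pole_part_unique[OF F_proper F_le] by blast+
  have K: "K \<noteq> 0"
    by (simp add: K_def)
  show "E1 = j powi k / j\<^sup>2 * E2"
    using E_eq K by (simp add: field_simps)
  have "D1 - 2 * q * \<alpha> * E1 = K * ((D1 - 2 * q * \<alpha> * E1) / K)"
    using K by simp
  also have "\<dots> = K * (j powi k * ((D2 - 2 * q * \<alpha>' * E2) / K / j) + V * (E2 / K\<^sup>2 / j\<^sup>2))"
    by (simp only: B_eq)
  also have "\<dots> = j powi k / j * (D2 - 2 * q * \<alpha>' * E2) + j powi k / j\<^sup>2 * (2 * q * of_int c * w) * E2"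
    using K j by (simp add: V_def field_simps power2_eq_square)
  finally show "D1 - 2 * q * \<alpha> * E1 = j powi k / j * (D2 - 2 * q * \<alpha>' * E2)
                                + j powi k / j\<^sup>2 * (2 * q * of_int c * w) * E2" .
qed

lemma mero_jacobi_pole_coefficients_modular:
  fixes N :: nat and k m a b c d :: int and s :: "rat \<times> rat" and \<tau> :: complex
    and E D :: "rat \<times> rat \<Rightarrow> complex \<Rightarrow> complex"
  assumes mj: "mero_jacobi N k m G S \<psi>" and g: "(a, b, c, d) \<in> G" and det: "a * d - b * c = 1"
    and \<tau>: "\<tau> \<in> upper_half_plane"
    and pe: "\<And>s \<tau>. \<tau> \<in> upper_half_plane \<Longrightarrow> pole_expansion N m \<psi> s \<tau> (E s \<tau>) (D s \<tau>)"
  shows "E s (moebius (a, b, c, d) \<tau>) = cfac (a, b, c, d) \<tau> powi (k - 2) * E (ract s (a, b, c, d)) \<tau>"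
    and "D s (moebius (a, b, c, d) \<tau>) = cfac (a, b, c, d) \<tau> powi (k - 1) * D (ract s (a, b, c, d)) \<tau>"
proof -
  define j \<tau>' s' where "j = cfac (a, b, c, d) \<tau>" and "\<tau>' = moebius (a, b, c, d) \<tau>"
    and "s' = ract s (a, b, c, d)"
  define q :: complex where "q = of_int m / of_nat N"
  have j: "j \<noteq> 0"
    unfolding j_def using det \<tau> by (rule cfac_nonzero)
  have powi_k: "j powi (k - 2) = j powi k / j\<^sup>2" "j powi (k - 1) = j powi k / j"
    using j by (simp_all add: power_int_diff)
  note compare = mero_jacobi_pole_coefficients_compare[OF mj g det \<tau> pe, of s,
      folded j_def \<tau>'_def s'_def q_def]
  then show E: "E s \<tau>' = j powi (k - 2) * E s' \<tau>"
    by (simp add: powi_k)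
  have fst_s': "of_rat (fst s') * j = of_rat (fst s) + of_int c * zpt s' \<tau>"
    unfolding s'_def j_def using det by (rule fst_ract_mult_cfac)
  have "D s \<tau>' * j\<^sup>2 + 2 * q * j powi k * E s' \<tau> * (of_rat (fst s') * j)
        = j powi k * j * D s' \<tau> + 2 * q * j powi k * E s' \<tau> * (of_rat (fst s) + of_int c * zpt s' \<tau>)"
    using compare(2) j by (simp add: E powi_k field_simps power2_eq_square)
  then have "D s \<tau>' * j\<^sup>2 = j powi k * j * D s' \<tau>"
    by (simp add: fst_s')
  then show "D s \<tau>' = j powi (k - 1) * D s' \<tau>"
    using j by (simp add: powi_k field_simps power2_eq_square)
qed

theorem proposition4p6:
  fixes N :: nat and k :: int and m :: int
    and G :: "(int \<times> int \<times> int \<times> int) set"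
    and S :: "(rat \<times> rat) set"
    and \<psi> :: "complex \<Rightarrow> complex \<Rightarrow> complex"
    and E D :: "rat \<times> rat \<Rightarrow> complex \<Rightarrow> complex"
  assumes "N \<ge> 1" and "m > 0"
    and "G = Gamma0 N \<or> G = Gamma1 N"
    and "mero_jacobi N k m G S \<psi>"
    and "\<And>s \<tau>. \<tau> \<in> upper_half_plane \<Longrightarrow> pole_expansion N m \<psi> s \<tau> (E s \<tau>) (D s \<tau>)"
  shows "\<forall>g\<in>G. \<forall>\<tau>\<in>upper_half_plane. \<forall>s\<in>S.
           E s (moebius g \<tau>) = (cfac g \<tau>) powi (k - 2) * E (ract s g) \<tau> \<and>
           D s (moebius g \<tau>) = (cfac g \<tau>) powi (k - 1) * D (ract s g) \<tau>"
proof (intro ballI)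
  fix g \<tau> s
  assume "g \<in> G" and \<tau>: "\<tau> \<in> upper_half_plane"
  obtain a b c d where g: "g = (a, b, c, d)"
    by (cases g) auto
  have "a * d - b * c = 1"
    using assms(3) \<open>g \<in> G\<close> by (auto simp: g Gamma0_def Gamma1_def)
  then show "E s (moebius g \<tau>) = (cfac g \<tau>) powi (k - 2) * E (ract s g) \<tau> \<and>
             D s (moebius g \<tau>) = (cfac g \<tau>) powi (k - 1) * D (ract s g) \<tau>"
    using mero_jacobi_pole_coefficients_modular[OF assms(4) \<open>g \<in> G\<close>[unfolded g] _ \<tau> assms(5)]
    by (simp add: g)
qed

end
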